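(* Let $n\ge2$, $0<R<\sqrt{\tfrac38(3n-5)(2n-3)^3}$, let $u_0$ satisfy (C1)–(C6), and let $\lambda>0$ with $\lambda R<x_1$. Then there is $C>0$ such that $v(r,t):=Ce^{-\lambda^2t}r^{n-\frac32}J_\nu(\lambda r)$ satisfies $u_0\ge u^*-v(\cdot,0)$ in $B_R$.
   Context: $B_R=\{x\in\mathbb R^n:|x|<R\}$; radial functions written in $r=|x|$, subscript $r$ = radial derivative. $\alpha:=\sqrt[3]{9n-15}$, $u^*(r):=-\alpha r^{1/3}$, $\nu:=\tfrac16\sqrt{36n^2-96n+61}$, $J_\nu$ the Bessel function of the first kind of order $\nu$; $x_0>0$, $x_1\in(0,x_0)$ the first positive roots of $J_\nu$ and $J_\nu'$. Conditions on $u_0$: (C1) $u_0\in C^2(\overline{B_R}\setminus\{0\})$; (C2) $u_0$ radially symmetric; (C3) $u^*\ge u_0$; (C4) $\limsup_{r\searrow0}|r^{\frac32-n-\nu}(u^*(r)-u_0(r))|<\infty$; (C5) $u_0(R)=u^*(R)$; (C6) there is $C>0$ with $0\ge u_{0r}(r)\ge -Cr^{-2/3}$ for all $r\in(0,R)$. *)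

theory Defs
  imports "HOL-Analysis.Analysis" "HOL-Library.Liminf_Limsup"
begin

(* Bessel function of the first kind of order nu (series definition, used for x > 0) *)
definition besselJ :: "real \<Rightarrow> real \<Rightarrow> real" where
  "besselJ \<nu> x = (\<Sum>m. (-1) ^ m / (fact m * Gamma (real m + \<nu> + 1)) * (x / 2) powr (2 * real m + \<nu>))"

definition nu :: "nat \<Rightarrow> real" where
  "nu n = sqrt (36 * (real n)^2 - 96 * real n + 61) / 6"

definition alpha :: "nat \<Rightarrow> real" where
  "alpha n = root 3 (9 * real n - 15)"

definition ustar :: "nat \<Rightarrow> real \<Rightarrow> real" where
  "ustar n r = - alpha n * r powr (1/3)"

definition x1 :: "real \<Rightarrow> real" where
  "x1 \<nu> = Inf {x. 0 < x \<and> deriv (besselJ \<nu>) x = 0}"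

definition vfun :: "nat \<Rightarrow> real \<Rightarrow> real \<Rightarrow> real \<Rightarrow> real \<Rightarrow> real" where
  "vfun n C lam r t = C * exp (- ((lam ^ 2) * t)) * r powr (real n - 3/2) * besselJ (nu n) (lam * r)"

(* radial profile f is C^2 on (0,R] (one-sided derivatives at R), i.e. u0 in C^2(closed ball minus 0) *)
definition C2_on_0R :: "(real \<Rightarrow> real) \<Rightarrow> real \<Rightarrow> bool" where
  "C2_on_0R f R \<longleftrightarrow> (\<exists>f1 f2. (\<forall>r\<in>{0<..R}. (f has_real_derivative f1 r) (at r within {0<..R})
      \<and> (f1 has_real_derivative f2 r) (at r within {0<..R})) \<and> continuous_on {0<..R} f2)"

end

theory Submission
  imports Defs
begin

text \<open>
  Put \<open>w = u\<^sup>* - u\<^sub>0\<close> and \<open>\<phi>(r) = r\<^bsup>n-3/2\<^esup> J\<^sub>\<nu>(\<lambda>r)\<close>.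
  Since \<open>J\<^sub>\<nu>\<close> starts like \<open>(x/2)\<^sup>\<nu>/\<Gamma>(\<nu>+1)\<close> and cannot turn back to zero
  before its first critical point \<open>x\<^sub>1\<close>, \<open>\<phi>\<close> is positive on \<open>(0,R]\<close> and
  comparable to \<open>r\<^bsup>n-3/2+\<nu>\<^esup>\<close> near \<open>0\<close>. Condition (C4) says exactly that
  \<open>w = O(r\<^bsup>n-3/2+\<nu>\<^esup>)\<close> there, so \<open>w \<le> C \<phi>\<close> near \<open>0\<close>; on the rest of
  \<open>(0,R]\<close> the continuous ratio \<open>w/\<phi>\<close> is bounded by compactness.
\<close>

definition bessel_coeff :: "real \<Rightarrow> nat \<Rightarrow> real" where
  "bessel_coeff v m = (-1) ^ m / (fact m * Gamma (real m + v + 1))"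

definition bessel_series :: "real \<Rightarrow> real \<Rightarrow> real" where
  "bessel_series v y = (\<Sum>m. bessel_coeff v m * y ^ m)"

lemma pochhammer_ge_1:
  fixes a :: real
  assumes "a \<ge> 1"
  shows "pochhammer a m \<ge> 1"
proof (induction m)
  case (Suc m)
  have "1 * 1 \<le> pochhammer a m * (a + real m)"
    using Suc assms by (intro mult_mono) auto
  then show ?case by (simp add: pochhammer_Suc)
qed simp

lemma Gamma_le_Gamma_shift:
  assumes "v \<ge> 0"
  shows "Gamma (v + 1) \<le> Gamma (real m + v + 1)"
proof -
  have "v + 1 \<notin> \<int>\<^sub>\<le>\<^sub>0"
    using assms by (metis add_nonneg_pos less_numeral_extra(1) nonpos_Ints_nonpos not_le)
  then have "pochhammer (v + 1) m = Gamma (v + 1 + real m) / Gamma (v + 1)"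
    by (simp add: pochhammer_Gamma)
  then have "1 \<le> Gamma (v + 1 + real m) / Gamma (v + 1)"
    using pochhammer_ge_1[of "v + 1" m] assms by simp
  moreover have "Gamma (v + 1) > 0"
    using assms by simp
  ultimately show ?thesis
    by (simp add: field_simps algebra_simps)
qed

lemma summable_bessel_coeff:
  assumes "v \<ge> 0"
  shows "summable (\<lambda>m. bessel_coeff v m * y ^ m)"
proof (rule summable_comparison_test')
  show "summable (\<lambda>m. \<bar>y\<bar> ^ m / fact m / Gamma (v + 1))"
    using summable_exp[of "\<bar>y\<bar>"] by (intro summable_divide) (simp add: inverse_eq_divide)
  fix m :: nat
  have "norm (bessel_coeff v m * y ^ m) = \<bar>y\<bar> ^ m / (fact m * Gamma (real m + v + 1))"
    using assms by (simp add: bessel_coeff_def abs_mult power_abs)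
  also have "\<dots> \<le> \<bar>y\<bar> ^ m / (fact m * Gamma (v + 1))"
    using Gamma_le_Gamma_shift[OF assms, of m] assms
    by (intro divide_left_mono mult_left_mono) (auto intro!: mult_pos_pos)
  finally show "norm (bessel_coeff v m * y ^ m) \<le> \<bar>y\<bar> ^ m / fact m / Gamma (v + 1)"
    by simp
qed

lemma isCont_bessel_series:
  assumes "v \<ge> 0"
  shows "isCont (bessel_series v) y"
  unfolding bessel_series_def[abs_def]
  by (rule isCont_powser_converges_everywhere) (rule summable_bessel_coeff[OF assms])

lemma differentiable_bessel_series:
  assumes "v \<ge> 0"
  shows "bessel_series v differentiable (at y)"
  unfolding bessel_series_def[abs_def] real_differentiable_def
  using termdiffs_strong_converges_everywhere[OF summable_bessel_coeff[OF assms]] by blast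

lemma bessel_series_0: "bessel_series v 0 = 1 / Gamma (v + 1)"
  using powser_sums_zero[of "bessel_coeff v"]
  by (simp add: bessel_series_def sums_iff bessel_coeff_def)

lemma besselJ_eq_bessel_series:
  assumes "x > 0" "v \<ge> 0"
  shows "besselJ v x = (x / 2) powr v * bessel_series v (x\<^sup>2 / 4)"
proof -
  have "(x / 2) powr (2 * real m + v) = (x / 2) powr v * (x\<^sup>2 / 4) ^ m" for m
    using assms by (simp add: powr_add powr_powr[symmetric] power2_eq_square flip: powr_realpow)
  then have "(-1) ^ m / (fact m * Gamma (real m + v + 1)) * (x / 2) powr (2 * real m + v)
      = (x / 2) powr v * (bessel_coeff v m * (x\<^sup>2 / 4) ^ m)" for m
    by (simp add: bessel_coeff_def)
  then show ?thesis
    unfolding besselJ_def bessel_series_def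
    using suminf_mult[OF summable_bessel_coeff[OF assms(2)]] by simp
qed

lemma eventually_besselJ_eq_bessel_series:
  assumes "v \<ge> 0"
  shows "eventually (\<lambda>x. besselJ v x = (x / 2) powr v * bessel_series v (x\<^sup>2 / 4)) (at_right 0)"
  using assms by (auto simp: eventually_at_filter besselJ_eq_bessel_series)

lemma differentiable_besselJ:
  assumes "x > 0" "v \<ge> 0"
  shows "besselJ v differentiable (at x)"
proof -
  have "(\<lambda>x. (x / 2) powr v) differentiable (at x)"
    unfolding real_differentiable_def using assms by (intro exI) (auto intro!: derivative_eq_intros)
  moreover have "(\<lambda>x. bessel_series v (x\<^sup>2 / 4)) differentiable (at x)"
    using differentiable_chain_at[of "\<lambda>x. x\<^sup>2 / 4" x "bessel_series v"]
      differentiable_bessel_series[OF assms(2)]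
    by (simp add: o_def)
  ultimately have "(\<lambda>x. (x / 2) powr v * bessel_series v (x\<^sup>2 / 4)) differentiable (at x)"
    by (rule differentiable_mult)
  then show ?thesis
    by (rule differentiable_transform_within[of _ _ _ x])
       (use assms besselJ_eq_bessel_series in \<open>auto simp: dist_real_def\<close>)
qed

lemma isCont_besselJ:
  assumes "x > 0" "v \<ge> 0"
  shows "isCont (besselJ v) x"
  using differentiable_besselJ[OF assms] differentiable_imp_continuous_within by blast

lemma bessel_series_tendsto:
  assumes "v \<ge> 0"
  shows "((\<lambda>x. bessel_series v (x\<^sup>2 / 4)) \<longlongrightarrow> 1 / Gamma (v + 1)) (at_right 0)"
proof -
  have "isCont (\<lambda>x. bessel_series v (x\<^sup>2 / 4)) 0"
    by (intro continuous_intros isCont_o2[OF _ isCont_bessel_series[OF assms]]) auto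
  then show ?thesis
    by (simp add: isCont_def bessel_series_0 filterlim_at_split)
qed

lemma besselJ_tendsto_0:
  assumes "v > 0"
  shows "(besselJ v \<longlongrightarrow> 0) (at_right 0)"
proof -
  have "((\<lambda>x. x / 2) \<longlongrightarrow> 0) (at_right (0::real))"
    by (intro tendsto_eq_intros) (auto intro: tendsto_ident_at)
  then have "((\<lambda>x. (x / 2) powr v) \<longlongrightarrow> 0) (at_right 0)"
    using assms by (intro tendsto_zero_powrI) (auto simp: eventually_at_filter)
  then have "((\<lambda>x. (x / 2) powr v * bessel_series v (x\<^sup>2 / 4)) \<longlongrightarrow> 0 * (1 / Gamma (v + 1)))
      (at_right 0)"
    using assms by (intro tendsto_mult bessel_series_tendsto) auto
  then show ?thesis
    using tendsto_cong[OF eventually_besselJ_eq_bessel_series] assms by simp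
qed

lemma eventually_besselJ_ge:
  assumes "v \<ge> 0"
  shows "eventually (\<lambda>x. (x / 2) powr v / (2 * Gamma (v + 1)) \<le> besselJ v x) (at_right 0)"
proof -
  have "Gamma (v + 1) > 0"
    using assms by simp
  then have "1 / (2 * Gamma (v + 1)) < 1 / Gamma (v + 1)"
    by (simp add: field_simps)
  from order_tendstoD(1)[OF bessel_series_tendsto[OF assms] this]
  have "eventually (\<lambda>x. 1 / (2 * Gamma (v + 1)) < bessel_series v (x\<^sup>2 / 4)) (at_right 0)" .
  then show ?thesis
    using eventually_besselJ_eq_bessel_series[OF assms]
  proof eventually_elim
    case (elim x)
    have "(x / 2) powr v * (1 / (2 * Gamma (v + 1))) \<le> (x / 2) powr v * bessel_series v (x\<^sup>2 / 4)"
      using elim(1) by (intro mult_left_mono) auto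
    then show ?case
      using elim(2) by simp
  qed
qed

lemma eventually_besselJ_pos:
  assumes "v \<ge> 0"
  shows "eventually (\<lambda>x. 0 < besselJ v x) (at_right 0)"
  using eventually_besselJ_ge[OF assms] eventually_at_right_less
  by eventually_elim (use assms in \<open>auto intro: less_le_trans[rotated]\<close>)

text \<open>
  If \<open>J\<^sub>v(x) \<le> 0\<close>, then \<open>J\<^sub>v\<close>, which is positive near \<open>0\<close> and tends to \<open>0\<close> there,
  attains its maximum over some \<open>[d, x]\<close> at an interior point: a critical point below \<open>x\<close>.
\<close>

lemma besselJ_pos:
  assumes v: "v > 0" and x: "0 < x" "x \<le> x1 v"
  shows "besselJ v x > 0"
proof (rule ccontr)
  assume nonpos: "\<not> besselJ v x > 0"
  obtain e where e: "0 < e" "e < x" "besselJ v e > 0"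
    using eventually_happens[OF eventually_conj[OF eventually_besselJ_pos[OF less_imp_le[OF v]]
          eventually_conj[OF eventually_at_right_less order_tendstoD(2)[OF tendsto_ident_at x(1)]]]]
          v by (auto simp: trivial_limit_at_right_real)
  obtain d where d: "0 < d" "d < e" "0 < besselJ v d" "besselJ v d < besselJ v e"
    using eventually_happens[OF eventually_conj[OF eventually_besselJ_pos[OF less_imp_le[OF v]]
          eventually_conj[OF eventually_at_right_less
            eventually_conj[OF order_tendstoD(2)[OF tendsto_ident_at e(1)]
              order_tendstoD(2)[OF besselJ_tendsto_0[OF v] e(3)]]]]]
          v by (auto simp: trivial_limit_at_right_real)
  have "continuous_on {d..x} (besselJ v)"
    using d v by (intro continuous_at_imp_continuous_on ballI isCont_besselJ) auto
  then obtain z where z: "z \<in> {d..x}" and zmax: "\<And>y. y \<in> {d..x} \<Longrightarrow> besselJ v y \<le> besselJ v z"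
    using continuous_attains_sup[of "{d..x}" "besselJ v"] d e by auto
  have "besselJ v e \<le> besselJ v z"
    using zmax d e by auto
  then have z_inner: "d < z" "z < x"
    using z d e nonpos by (auto simp: order.order_iff_strict)
  have deriv_z: "DERIV (besselJ v) z :> deriv (besselJ v) z"
    using differentiable_besselJ[of z v] z_inner d v by (simp add: DERIV_deriv_iff_real_differentiable)
  have "deriv (besselJ v) z = 0"
    by (rule DERIV_local_max[OF deriv_z, of "min (z - d) (x - z)"])
       (use z_inner zmax in \<open>auto simp: abs_less_iff\<close>)
  moreover have "bdd_below {y. 0 < y \<and> deriv (besselJ v) y = 0}"
    by (rule bdd_belowI[of _ 0]) auto
  ultimately have "x1 v \<le> z"
    unfolding x1_def using z_inner d by (intro cInf_lower) auto
  then show False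
    using z_inner x by simp
qed

lemma Limsup_abs_finite_imp_eventually_bounded:
  assumes "Limsup F (\<lambda>x. ereal \<bar>f x\<bar>) < \<infinity>"
  shows "\<exists>K. eventually (\<lambda>x. \<bar>f x\<bar> < K) F"
proof -
  obtain K :: nat where "Limsup F (\<lambda>x. ereal \<bar>f x\<bar>) < ereal (real K)"
    using assms less_PInf_Ex_of_nat by auto
  then show ?thesis
    using Limsup_lessD by fastforce
qed

lemma eventually_le_bessel_profile:
  fixes w :: "real \<Rightarrow> real"
  assumes v: "v \<ge> 0" and lam: "lam > 0"
    and w: "Limsup (at_right 0) (\<lambda>r. ereal \<bar>r powr (- (p + v)) * w r\<bar>) < \<infinity>"
  shows "\<exists>K. eventually (\<lambda>r. w r \<le> K * (r powr p * besselJ v (lam * r))) (at_right 0)"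
proof -
  define c where "c = (lam / 2) powr v / (2 * Gamma (v + 1))"
  have c: "c > 0"
    using lam v by (simp add: c_def)
  obtain K where K: "eventually (\<lambda>r. \<bar>r powr (- (p + v)) * w r\<bar> < K) (at_right 0)"
    using Limsup_abs_finite_imp_eventually_bounded[OF w] by blast
  have "filterlim (\<lambda>r. lam * r) (at_right 0) (at_right (0::real))"
    using lam by (auto simp: filterlim_at eventually_at_filter intro!: tendsto_eq_intros)
  from eventually_compose_filterlim[OF eventually_besselJ_ge[OF v] this]
  have J: "eventually (\<lambda>r. c * r powr v \<le> besselJ v (lam * r)) (at_right 0)"
    using eventually_at_right_less
  proof eventually_elim
    case (elim r)
    have "(lam * r / 2) powr v = (lam / 2) powr v * r powr v"
      using lam elim(2) by (simp add: powr_mult[symmetric])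
    then show ?case
      using elim(1) by (simp add: c_def)
  qed
  have "eventually (\<lambda>r. w r \<le> (K / c) * (r powr p * besselJ v (lam * r))) (at_right 0)"
    using K J eventually_at_right_less
  proof eventually_elim
    case (elim r)
    have "w r = r powr (p + v) * (r powr (- (p + v)) * w r)"
      using elim(3) by (simp flip: powr_add)
    also have "\<dots> \<le> r powr (p + v) * K"
      using elim(1) by (intro mult_left_mono) auto
    also have "\<dots> = (K / c) * (r powr p * (c * r powr v))"
      using c by (simp add: powr_add)
    also have "\<dots> \<le> (K / c) * (r powr p * besselJ v (lam * r))"
      using elim(1,2) c by (intro mult_left_mono) auto
    finally show ?case .
  qed
  then show ?thesis ..
qed

lemma le_multiple_of_positive:
  fixes w \<phi> :: "real \<Rightarrow> real"
  assumes w: "continuous_on {0<..R} w" and \<phi>: "continuous_on {0<..R} \<phi>"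
    and \<phi>_pos: "\<And>r. 0 < r \<Longrightarrow> r \<le> R \<Longrightarrow> \<phi> r > 0"
    and near: "eventually (\<lambda>r. w r \<le> K * \<phi> r) (at_right 0)"
  shows "\<exists>C>0. \<forall>r\<in>{0<..R}. w r \<le> C * \<phi> r"
proof -
  obtain d where d: "d > 0" and d_near: "\<And>r. 0 < r \<Longrightarrow> r < d \<Longrightarrow> w r \<le> K * \<phi> r"
    using near by (auto simp: eventually_at_right_field)
  have "\<phi> r \<noteq> 0" if "r \<in> {d..R}" for r
    using \<phi>_pos[of r] that d by auto
  then have "continuous_on {d..R} (\<lambda>r. w r / \<phi> r)"
    using d by (intro continuous_intros continuous_on_subset[OF w] continuous_on_subset[OF \<phi>]) auto
  then have "bounded ((\<lambda>r. w r / \<phi> r) ` {d..R})"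
    by (intro compact_imp_bounded compact_continuous_image) auto
  then obtain B where "\<forall>x\<in>(\<lambda>r. w r / \<phi> r) ` {d..R}. \<bar>x\<bar> \<le> B"
    unfolding bounded_real by blast
  then have B: "w r / \<phi> r \<le> B" if "d \<le> r" "r \<le> R" for r
    using that by (force simp del: abs_divide dest: abs_le_D1)
  define C where "C = \<bar>K\<bar> + \<bar>B\<bar> + 1"
  have "w r \<le> C * \<phi> r" if r: "0 < r" "r \<le> R" for r
  proof (cases "r < d")
    case True
    then show ?thesis
      using d_near[of r] \<phi>_pos[OF r] r
      by (auto simp: C_def intro: order.trans[OF _ mult_right_mono])
  next
    case False
    then have "w r / \<phi> r \<le> C"
      using B[of r] r by (simp add: C_def)
    then show ?thesis
      using \<phi>_pos[OF r] by (simp add: pos_divide_le_eq)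
  qed
  moreover have "C > 0"
    by (simp add: C_def add_nonneg_pos)
  ultimately show ?thesis
    by auto
qed

lemma C2_on_0R_imp_continuous_on: "C2_on_0R f R \<Longrightarrow> continuous_on {0<..R} f"
  unfolding C2_on_0R_def continuous_on_eq_continuous_within
  using DERIV_continuous by blast

lemma nu_pos:
  assumes "n \<ge> 2"
  shows "nu n > 0"
proof -
  have "6 * real n - 8 \<ge> 4"
    using assms by simp
  then have "(6 * real n - 8)\<^sup>2 \<ge> 4\<^sup>2"
    by (intro power_mono) auto
  moreover have "36 * (real n)\<^sup>2 - 96 * real n + 61 = (6 * real n - 8)\<^sup>2 - 3"
    by (simp add: power2_eq_square algebra_simps)
  ultimately show ?thesis
    by (simp add: nu_def)
qed

theorem mainTheorem10:
  fixes n :: nat and R lam :: real and u0 :: "real \<Rightarrow> real"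
  assumes "n \<ge> 2"
    and "0 < R" and "R < sqrt (3/8 * (3 * real n - 5) * (2 * real n - 3)^3)"
    and C1: "C2_on_0R u0 R"
    and C3: "\<forall>r\<in>{0<..R}. ustar n r \<ge> u0 r"
    and C4: "Limsup (at_right 0) (\<lambda>r. ereal \<bar>r powr (3/2 - real n - nu n) * (ustar n r - u0 r)\<bar>) < \<infinity>"
    and C5: "u0 R = ustar n R"
    and C6: "\<exists>C>0. \<forall>r\<in>{0<..<R}. 0 \<ge> deriv u0 r \<and> deriv u0 r \<ge> - C * r powr (-2/3)"
    and "lam > 0" and "lam * R < x1 (nu n)"
  shows "\<exists>C>0. \<forall>r\<in>{0<..<R}. u0 r \<ge> ustar n r - vfun n C lam r 0"
proof -
  \<comment> \<open>Only (C1), through continuity, and (C4) are needed; (C3), (C5), (C6) and the bound on \<open>R\<close> are not.\<close>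
  define \<phi> where "\<phi> r = r powr (real n - 3/2) * besselJ (nu n) (lam * r)" for r
  have \<nu>: "nu n > 0"
    using nu_pos \<open>n \<ge> 2\<close> .
  have \<phi>_pos: "\<phi> r > 0" if "0 < r" "r \<le> R" for r
  proof -
    have "lam * r \<le> x1 (nu n)"
      using that \<open>lam > 0\<close> \<open>lam * R < x1 (nu n)\<close> mult_left_mono[of r R lam] by linarith
    then show ?thesis
      using besselJ_pos[OF \<nu>, of "lam * r"] that \<open>lam > 0\<close> by (simp add: \<phi>_def)
  qed
  have "continuous_on {0<..R} \<phi>"
    unfolding \<phi>_def using \<open>lam > 0\<close> \<nu>
    by (intro continuous_at_imp_continuous_on ballI continuous_intros
        isCont_o2[OF _ isCont_besselJ]) auto
  moreover have "continuous_on {0<..R} (\<lambda>r. ustar n r - u0 r)"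
    unfolding ustar_def using C2_on_0R_imp_continuous_on[OF C1]
    by (intro continuous_intros) auto
  moreover obtain K where "eventually (\<lambda>r. ustar n r - u0 r \<le> K * \<phi> r) (at_right 0)"
  proof -
    have "3/2 - real n - nu n = - ((real n - 3/2) + nu n)"
      by simp
    then have "Limsup (at_right 0)
        (\<lambda>r. ereal \<bar>r powr (- ((real n - 3/2) + nu n)) * (ustar n r - u0 r)\<bar>) < \<infinity>"
      using C4 by (simp only:)
    from eventually_le_bessel_profile[OF less_imp_le[OF \<nu>] \<open>lam > 0\<close> this]
    show thesis
      using that by (auto simp: \<phi>_def)
  qed
  ultimately obtain C where "C > 0" "\<forall>r\<in>{0<..R}. ustar n r - u0 r \<le> C * \<phi> r"
    using le_multiple_of_positive \<phi>_pos by blast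
  then show ?thesis
    by (intro exI[of _ C]) (auto simp: vfun_def \<phi>_def algebra_simps)
qed

end
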